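(* Let $R$ be a prime right noetherian ring whose right Krull dimension is a finite integer $n$, let $m\le n$ be an integer, let $X=\{p\in \operatorname{Spec}R : |R/p| = m\}$, and let $V=\bigcap_{p\in X}C(p)$. Define $k=\{I : I\cap V\neq\emptyset\}$, $w=\{I : R/I \text{ is } V\text{-torsion}\}$, $g=\{I : |R/I|<m\}$ (families of right ideals of $R$). Then: (i) $w$ and $g$ are Gabriel filters; (ii) if $X$ has the right intersection condition, then $g\subseteq k$.
   Context: All modules are right modules; $|M|$ denotes the (right) Krull dimension of $M$. For an ideal $A$, $C(A)$ is the set of elements of $R$ regular modulo $A$. A right $R$-module $M$ is $V$-torsion if for every $x\in M$ there is $t\in V$ with $xt=0$. A family $F$ of right ideals is a Gabriel filter if: (a) $I\in F$ and $I\subseteq J$ (a right ideal) imply $J\in F$; (b) $I,J\in F$ imply $I\cap J\in F$; (c) $I\in F$ and $x\in R$ imply $x^{-1}(I)=\{a\in R: xa\in I\}\in F$. $X$ has the right intersection condition if for every right ideal $I$ with $I\cap C(p)\neq\emptyset$ for all $p\in X$, one has $I\cap V\neq\emptyset$. *)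

theory Defs
  imports Main
begin

text \<open>Right R-modules of the form J/I (I, J right ideals, I contained in J) are represented by the
interval of right ideals between I and J, which is exactly their lattice of submodules.\<close>

definition right_ideal :: "'a::ring_1 set \<Rightarrow> bool" where
  "right_ideal I \<longleftrightarrow> 0 \<in> I \<and> (\<forall>x\<in>I. \<forall>y\<in>I. x + y \<in> I) \<and> (\<forall>x\<in>I. - x \<in> I)
      \<and> (\<forall>x\<in>I. \<forall>r. x * r \<in> I)"

definition two_sided_ideal :: "'a::ring_1 set \<Rightarrow> bool" where
  "two_sided_ideal I \<longleftrightarrow> right_ideal I \<and> (\<forall>x\<in>I. \<forall>r. r * x \<in> I)"

definition prime_ideal :: "'a::ring_1 set \<Rightarrow> bool" where
  "prime_ideal P \<longleftrightarrow> two_sided_ideal P \<and> P \<noteq> UNIV \<and>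
     (\<forall>A B. two_sided_ideal A \<longrightarrow> two_sided_ideal B \<longrightarrow> (\<forall>a\<in>A. \<forall>b\<in>B. a * b \<in> P)
        \<longrightarrow> A \<subseteq> P \<or> B \<subseteq> P)"

definition Spec :: "'a::ring_1 set set" where
  "Spec = {P. prime_ideal P}"

definition prime_ring :: "'a::ring_1 itself \<Rightarrow> bool" where
  "prime_ring _ \<longleftrightarrow> prime_ideal ({0} :: 'a set)"

definition right_noetherian :: "'a::ring_1 itself \<Rightarrow> bool" where
  "right_noetherian _ \<longleftrightarrow> (\<forall>C :: nat \<Rightarrow> 'a set. (\<forall>i. right_ideal (C i)) \<longrightarrow>
      (\<forall>i. C i \<subseteq> C (Suc i)) \<longrightarrow> (\<exists>N. \<forall>i\<ge>N. C i = C N))"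

text \<open>Krull dimension (deviation of the submodule lattice).  kd_le j I J means that the module
J/I has Krull dimension at most j - 1 (as an integer; -1 is the dimension of the zero module).
|M| = -1 iff M = 0;  |M| \<le> a (a \<ge> 0) iff for every descending chain M_0 \<supseteq> M_1 \<supseteq> ...
of submodules, |M_i/M_(i+1)| < a for all but finitely many i.\<close>
fun kd_le :: "nat \<Rightarrow> 'a::ring_1 set \<Rightarrow> 'a set \<Rightarrow> bool" where
  "kd_le 0 I J \<longleftrightarrow> J \<subseteq> I"
| "kd_le (Suc k) I J \<longleftrightarrow>
     (\<forall>C :: nat \<Rightarrow> 'a set. (\<forall>i. right_ideal (C i) \<and> I \<subseteq> C i \<and> C i \<subseteq> J \<and> C (Suc i) \<subseteq> C i)
        \<longrightarrow> (\<exists>N. \<forall>i\<ge>N. kd_le k (C (Suc i)) (C i)))"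

definition has_krull_dim :: "'a::ring_1 set \<Rightarrow> 'a set \<Rightarrow> bool" where
  "has_krull_dim I J \<longleftrightarrow> (\<exists>j. kd_le j I J)"

text \<open>Krull dimension of J/I as an integer (only meaningful when has_krull_dim I J).\<close>
definition krull_dim :: "'a::ring_1 set \<Rightarrow> 'a set \<Rightarrow> int" where
  "krull_dim I J = int (LEAST j. kd_le j I J) - 1"

text \<open>C(A): elements regular modulo A (left and right regular).\<close>
definition regular_mod :: "'a::ring_1 set \<Rightarrow> 'a set" where
  "regular_mod A = {c. (\<forall>x. x * c \<in> A \<longrightarrow> x \<in> A) \<and> (\<forall>x. c * x \<in> A \<longrightarrow> x \<in> A)}"

definition V_torsion_quot :: "'a::ring_1 set \<Rightarrow> 'a set \<Rightarrow> bool" where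
  "V_torsion_quot V I \<longleftrightarrow> (\<forall>x. \<exists>t\<in>V. x * t \<in> I)"

definition gabriel_filter :: "'a::ring_1 set set \<Rightarrow> bool" where
  "gabriel_filter F \<longleftrightarrow> (\<forall>I\<in>F. right_ideal I) \<and>
     (\<forall>I J. I \<in> F \<longrightarrow> right_ideal J \<longrightarrow> I \<subseteq> J \<longrightarrow> J \<in> F) \<and>
     (\<forall>I J. I \<in> F \<longrightarrow> J \<in> F \<longrightarrow> I \<inter> J \<in> F) \<and>
     (\<forall>I x. I \<in> F \<longrightarrow> {a. x * a \<in> I} \<in> F)"

definition right_intersection_condition :: "'a::ring_1 set set \<Rightarrow> 'a set \<Rightarrow> bool" where
  "right_intersection_condition X V \<longleftrightarrow>
     (\<forall>I. right_ideal I \<longrightarrow> (\<forall>p\<in>X. I \<inter> regular_mod p \<noteq> {}) \<longrightarrow> I \<inter> V \<noteq> {})"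

end

theory Submission
  imports Defs "HOL-Library.Set_Algebras"
begin

text \<open>Part (i) is closure bookkeeping: \<open>V\<close> is multiplicatively closed, and a bound on the Krull
  dimension of \<open>R/I\<close> passes to larger right ideals, to intersections (Krull dimension is
  bounded under extensions) and to \<open>{a. xa \<in> I}\<close>, since left multiplication by \<open>x\<close> embeds
  \<open>R/{a. xa \<in> I}\<close> into \<open>R/I\<close>.

  For (ii), let \<open>|R/I| < m = |R/p|\<close> with \<open>p \<in> X\<close>. Over a prime \<open>p\<close> of a right noetherian ring
  every nonzero right ideal \<open>K/p\<close> of \<open>R/p\<close> satisfies \<open>|K/p| = |R/p|\<close>; hence \<open>(I + p)/p\<close>, whose
  complements have dimension \<open>< m\<close>, is essential in \<open>R/p\<close>. By Goldie's theorem it contains an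
  element \<open>c = i + q\<close> that is left regular modulo \<open>p\<close>, and so is \<open>i \<in> I\<close>. Then \<open>|R/(iR + p)| < m\<close>,
  so \<open>i\<close> is also right regular: if \<open>xi \<in> p\<close> with \<open>x \<notin> p\<close>, the nonzero right ideal
  \<open>(xR + p)/p\<close> would be a quotient of \<open>R/(iR + p)\<close>. Thus \<open>I\<close> meets every \<open>C(p)\<close>, and the right
  intersection condition yields \<open>I \<inter> V \<noteq> {}\<close>.\<close>

section \<open>Right ideals\<close>

lemma right_ideal_zero: "right_ideal I \<Longrightarrow> 0 \<in> I"
  by (simp add: right_ideal_def)

lemma right_ideal_add: "right_ideal I \<Longrightarrow> x \<in> I \<Longrightarrow> y \<in> I \<Longrightarrow> x + y \<in> I"
  by (simp add: right_ideal_def)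

lemma right_ideal_minus: "right_ideal I \<Longrightarrow> x \<in> I \<Longrightarrow> - x \<in> I"
  by (simp add: right_ideal_def)

lemma right_ideal_mult_right: "right_ideal I \<Longrightarrow> x \<in> I \<Longrightarrow> x * r \<in> I"
  by (simp add: right_ideal_def)

lemma right_ideal_diff: "right_ideal I \<Longrightarrow> x \<in> I \<Longrightarrow> y \<in> I \<Longrightarrow> x - y \<in> I"
  using right_ideal_add[of I x "- y"] right_ideal_minus[of I y] by simp

lemma right_ideal_UNIV: "right_ideal UNIV"
  by (simp add: right_ideal_def)

lemma right_ideal_Int: "right_ideal A \<Longrightarrow> right_ideal B \<Longrightarrow> right_ideal (A \<inter> B)"
  by (simp add: right_ideal_def)

lemma right_ideal_preimage: "right_ideal I \<Longrightarrow> right_ideal {a. x * a \<in> I}"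
  by (simp add: right_ideal_def distrib_left flip: mult.assoc)

lemma right_ideal_set_plus:
  assumes "right_ideal A" "right_ideal B"
  shows "right_ideal (A + B)"
  unfolding right_ideal_def
proof (intro conjI ballI allI)
  show "0 \<in> A + B"
    using set_plus_intro[OF right_ideal_zero right_ideal_zero] assms by fastforce
  fix x assume "x \<in> A + B"
  then obtain a b where x: "x = a + b" "a \<in> A" "b \<in> B" by (rule set_plus_elim)
  show "- x \<in> A + B"
    using set_plus_intro[of "- a" A "- b" B] x assms by (simp add: right_ideal_minus)
  show "x * r \<in> A + B" for r
    using set_plus_intro[of "a * r" A "b * r" B] x assms
    by (simp add: right_ideal_mult_right distrib_right)
  fix y assume "y \<in> A + B"
  then obtain a' b' where y: "y = a' + b'" "a' \<in> A" "b' \<in> B" by (rule set_plus_elim)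
  show "x + y \<in> A + B"
    using set_plus_intro[of "a + a'" A "b + b'" B] x y assms
    by (simp add: right_ideal_add ac_simps)
qed

lemma elt_set_timesE:
  assumes "u \<in> x *o A"
  obtains a where "u = x * a" "a \<in> A"
  using assms by (auto simp: elt_set_times_def)

lemma right_ideal_elt_set_times:
  assumes "right_ideal A"
  shows "right_ideal (x *o A)"
  unfolding right_ideal_def
proof (intro conjI ballI allI)
  show "0 \<in> x *o A" using set_times_intro2[OF right_ideal_zero[OF assms], of x] by simp
  fix u assume "u \<in> x *o A"
  then obtain a where u: "u = x * a" "a \<in> A" by (rule elt_set_timesE)
  show "- u \<in> x *o A"
    using u set_times_intro2[OF right_ideal_minus[OF assms u(2)], of x] by simp
  show "u * r \<in> x *o A" for r
    using u set_times_intro2[OF right_ideal_mult_right[OF assms u(2)], of x r] by (simp add: mult.assoc)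
  fix v assume "v \<in> x *o A"
  then obtain b where v: "v = x * b" "b \<in> A" by (rule elt_set_timesE)
  show "u + v \<in> x *o A"
    using u v set_times_intro2[OF right_ideal_add[OF assms u(2) v(2)], of x] by (simp add: distrib_left)
qed

lemma set_plus_subset_right_ideal: "right_ideal C \<Longrightarrow> A \<subseteq> C \<Longrightarrow> B \<subseteq> C \<Longrightarrow> A + B \<subseteq> C"
  by (auto elim!: set_plus_elim intro: right_ideal_add)

lemma subset_set_plus_left: "right_ideal B \<Longrightarrow> A \<subseteq> A + B"
  by (metis add.commute right_ideal_zero set_zero_plus2)

lemma subset_set_plus_right: "right_ideal A \<Longrightarrow> B \<subseteq> A + B"
  by (simp add: right_ideal_zero set_zero_plus2)

lemma right_ideal_modular:
  assumes "right_ideal Y" "A \<subseteq> Y"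
  shows "Y \<inter> (A + B) = A + (Y \<inter> B)"
proof
  show "Y \<inter> (A + B) \<subseteq> A + (Y \<inter> B)"
  proof
    fix y assume y: "y \<in> Y \<inter> (A + B)"
    then obtain a b where ab: "y = a + b" "a \<in> A" "b \<in> B" by (auto elim: set_plus_elim)
    have "y - a \<in> Y" using y ab(2) assms right_ideal_diff[of Y y a] by blast
    then have "b \<in> Y \<inter> B" using ab by simp
    then show "y \<in> A + (Y \<inter> B)" using ab set_plus_intro by blast
  qed
  show "A + (Y \<inter> B) \<subseteq> Y \<inter> (A + B)"
    using assms set_plus_mono2[of A A "Y \<inter> B" B] set_plus_subset_right_ideal[of Y A "Y \<inter> B"]
    by blast
qed

section \<open>Krull dimension of intervals of right ideals\<close>

definition ideal_interval :: "'a::ring_1 set \<Rightarrow> 'a set \<Rightarrow> 'a set set" where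
  "ideal_interval I J = {A. right_ideal A \<and> I \<subseteq> A \<and> A \<subseteq> J}"

lemma ideal_interval_mono: "I \<subseteq> I' \<Longrightarrow> J' \<subseteq> J \<Longrightarrow> ideal_interval I' J' \<subseteq> ideal_interval I J"
  by (auto simp: ideal_interval_def)

lemma kd_le_SucD:
  assumes "kd_le (Suc k) I J" "\<And>i. C i \<in> ideal_interval I J" "\<And>i. C (Suc i) \<subseteq> C i"
  obtains N where "\<And>i. i \<ge> N \<Longrightarrow> kd_le k (C (Suc i)) (C i)"
proof -
  have "\<forall>i. right_ideal (C i) \<and> I \<subseteq> C i \<and> C i \<subseteq> J \<and> C (Suc i) \<subseteq> C i"
    using assms(2,3) by (simp add: ideal_interval_def)
  moreover have "\<forall>C. (\<forall>i. right_ideal (C i) \<and> I \<subseteq> C i \<and> C i \<subseteq> J \<and> C (Suc i) \<subseteq> C i)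
      \<longrightarrow> (\<exists>N. \<forall>i\<ge>N. kd_le k (C (Suc i)) (C i))"
    using assms(1) by (simp only: kd_le.simps(2))
  ultimately show thesis using that by blast
qed

lemma kd_le_SucI:
  assumes "\<And>C. (\<And>i. C i \<in> ideal_interval I J) \<Longrightarrow> (\<And>i. C (Suc i) \<subseteq> C i)
    \<Longrightarrow> \<exists>N. \<forall>i\<ge>N. kd_le k (C (Suc i)) (C i)"
  shows "kd_le (Suc k) I J"
  unfolding kd_le.simps(2)
proof (intro allI impI)
  fix C assume C: "\<forall>i. right_ideal (C i) \<and> I \<subseteq> C i \<and> C i \<subseteq> J \<and> C (Suc i) \<subseteq> C i"
  then have "\<And>i. C i \<in> ideal_interval I J" "\<And>i. C (Suc i) \<subseteq> C i"
    by (simp_all add: ideal_interval_def)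
  then show "\<exists>N. \<forall>i\<ge>N. kd_le k (C (Suc i)) (C i)" by (rule assms)
qed

lemma kd_le_order_embedding:
  assumes "kd_le j I J" "mono f" "right_ideal I'" "right_ideal J'" "I' \<subseteq> J'"
    and "\<And>A. A \<in> ideal_interval I' J' \<Longrightarrow> right_ideal (f A)"
    and "I \<subseteq> f I'" "f J' \<subseteq> J"
    and "\<And>A B. A \<in> ideal_interval I' J' \<Longrightarrow> B \<in> ideal_interval I' J' \<Longrightarrow> f A \<subseteq> f B \<Longrightarrow> A \<subseteq> B"
  shows "kd_le j I' J'"
  using assms
proof (induction j arbitrary: I J I' J')
  case 0
  have "J \<subseteq> I" using "0.prems"(1) by simp
  then have "f J' \<subseteq> f I'" using "0.prems"(7,8) by blast
  moreover have "J' \<in> ideal_interval I' J'" "I' \<in> ideal_interval I' J'"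
    using "0.prems"(3-5) by (auto simp: ideal_interval_def)
  ultimately have "J' \<subseteq> I'" using "0.prems"(9) by blast
  then show ?case by simp
next
  case (Suc k)
  show ?case
  proof (rule kd_le_SucI)
    fix C assume C: "\<And>i. C i \<in> ideal_interval I' J'" "\<And>i. C (Suc i) \<subseteq> C i"
    have fC: "f (C i) \<in> ideal_interval I J" for i
    proof -
      have "I' \<subseteq> C i" "C i \<subseteq> J'" using C(1)[of i] by (simp_all add: ideal_interval_def)
      then have "f I' \<subseteq> f (C i)" "f (C i) \<subseteq> f J'" using Suc.prems(2) by (simp_all add: monoD)
      then show ?thesis using Suc.prems(6)[OF C(1)] Suc.prems(7,8) unfolding ideal_interval_def by blast
    qed
    have "f (C (Suc i)) \<subseteq> f (C i)" for i using Suc.prems(2) C(2) by (simp add: monoD)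
    then obtain N where N: "\<And>i. i \<ge> N \<Longrightarrow> kd_le k (f (C (Suc i))) (f (C i))"
      using kd_le_SucD[of k I J "\<lambda>i. f (C i)", OF Suc.prems(1) fC] by blast
    have "kd_le k (C (Suc i)) (C i)" if "i \<ge> N" for i
    proof (rule Suc.IH[OF N[OF that] Suc.prems(2)])
      have sub: "ideal_interval (C (Suc i)) (C i) \<subseteq> ideal_interval I' J'"
        using C(1)[of i] C(1)[of "Suc i"] by (intro ideal_interval_mono) (auto simp: ideal_interval_def)
      show "\<And>A. A \<in> ideal_interval (C (Suc i)) (C i) \<Longrightarrow> right_ideal (f A)"
        using sub Suc.prems(6) by blast
      show "\<And>A B. A \<in> ideal_interval (C (Suc i)) (C i) \<Longrightarrow> B \<in> ideal_interval (C (Suc i)) (C i)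
          \<Longrightarrow> f A \<subseteq> f B \<Longrightarrow> A \<subseteq> B"
        using sub Suc.prems(9) by blast
    qed (use C in \<open>auto simp: ideal_interval_def\<close>)
    then show "\<exists>N. \<forall>i\<ge>N. kd_le k (C (Suc i)) (C i)" by blast
  qed
qed

lemma kd_le_subinterval:
  assumes "kd_le j I J" "right_ideal I'" "right_ideal J'" "I \<subseteq> I'" "I' \<subseteq> J'" "J' \<subseteq> J"
  shows "kd_le j I' J'"
  by (rule kd_le_order_embedding[where f = id, OF assms(1) _ assms(2,3,5)])
    (use assms(4,6) in \<open>simp_all add: mono_def ideal_interval_def\<close>)

lemma kd_le_Suc: "kd_le j I J \<Longrightarrow> kd_le (Suc j) I J"
proof (induction j arbitrary: I J)
  case 0
  show ?case
  proof (rule kd_le_SucI)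
    fix C :: "nat \<Rightarrow> 'a set" assume "\<And>i. C i \<in> ideal_interval I J"
    then have "C i = I" for i using 0 by (auto simp: ideal_interval_def)
    then show "\<exists>N. \<forall>i\<ge>N. kd_le 0 (C (Suc i)) (C i)" by simp
  qed
next
  case (Suc k)
  show ?case
  proof (rule kd_le_SucI)
    fix C assume "\<And>i. C i \<in> ideal_interval I J" "\<And>i. C (Suc i) \<subseteq> C i"
    then obtain N where "\<And>i. i \<ge> N \<Longrightarrow> kd_le k (C (Suc i)) (C i)"
      using kd_le_SucD[OF Suc.prems] by blast
    then show "\<exists>N. \<forall>i\<ge>N. kd_le (Suc k) (C (Suc i)) (C i)" using Suc.IH by blast
  qed
qed

lemma kd_le_mono:
  assumes "kd_le j I J" "j \<le> j'"
  shows "kd_le j' I J"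
  using assms(2) by (induction j' rule: dec_induct) (use assms(1) kd_le_Suc in blast)+

lemma kd_le_Int_embedding:
  assumes "kd_le j I J" "right_ideal L" "right_ideal U" "right_ideal B" "L \<subseteq> U"
    and "U \<subseteq> L + B" "I \<subseteq> L \<inter> B" "U \<inter> B \<subseteq> J"
  shows "kd_le j L U"
proof (rule kd_le_order_embedding[where f = "\<lambda>Y. Y \<inter> B", OF assms(1) _ assms(2,3,5)])
  show "mono (\<lambda>Y. Y \<inter> B)" by (auto simp: mono_def)
  show "right_ideal (A \<inter> B)" if "A \<in> ideal_interval L U" for A
    using that assms(4) by (simp add: ideal_interval_def right_ideal_Int)
  show "A \<subseteq> C" if A: "A \<in> ideal_interval L U" and C: "C \<in> ideal_interval L U"
    and AC: "A \<inter> B \<subseteq> C \<inter> B" for A C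
  proof -
    have "A = A \<inter> (L + B)" using A assms(6) by (auto simp: ideal_interval_def)
    also have "\<dots> = L + (A \<inter> B)" using A by (simp add: right_ideal_modular ideal_interval_def)
    also have "\<dots> \<subseteq> L + (C \<inter> B)" using AC by (rule set_plus_mono2[OF order.refl])
    also have "\<dots> = C \<inter> (L + B)" using C by (simp add: right_ideal_modular ideal_interval_def)
    finally show ?thesis by blast
  qed
qed (use assms(7,8) in auto)

lemma kd_le_plus_embedding:
  assumes "kd_le j I J" "right_ideal L" "right_ideal U" "right_ideal B" "L \<subseteq> U"
    and "U \<inter> B \<subseteq> L" "I \<subseteq> L + B" "U + B \<subseteq> J"
  shows "kd_le j L U"
proof (rule kd_le_order_embedding[where f = "\<lambda>Y. Y + B", OF assms(1) _ assms(2,3,5)])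
  show "mono (\<lambda>Y. Y + B)" by (simp add: mono_def set_plus_mono2)
  show "right_ideal (A + B)" if "A \<in> ideal_interval L U" for A
    using that assms(4) by (simp add: ideal_interval_def right_ideal_set_plus)
  show "A \<subseteq> C" if A: "A \<in> ideal_interval L U" and C: "C \<in> ideal_interval L U"
    and AC: "A + B \<subseteq> C + B" for A C
  proof -
    have "A \<subseteq> U \<inter> (A + B)" using A subset_set_plus_left[OF assms(4)] by (auto simp: ideal_interval_def)
    also have "\<dots> \<subseteq> U \<inter> (C + B)" using AC by blast
    also have "\<dots> = C + (U \<inter> B)" using C assms(3) by (simp add: right_ideal_modular ideal_interval_def)
    also have "\<dots> \<subseteq> C"
      using C assms(6) by (intro set_plus_subset_right_ideal) (auto simp: ideal_interval_def)
    finally show ?thesis .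
  qed
qed (use assms(7,8) in auto)

lemma kd_le_extension:
  assumes "kd_le j A B" "kd_le j B C" "right_ideal A" "right_ideal B" "right_ideal C"
    and "A \<subseteq> B" "B \<subseteq> C"
  shows "kd_le j A C"
  using assms
proof (induction j arbitrary: A B C)
  case 0
  then show ?case by simp
next
  case (Suc k)
  show ?case
  proof (rule kd_le_SucI)
    fix X assume X: "\<And>i. X i \<in> ideal_interval A C" "\<And>i. X (Suc i) \<subseteq> X i"
    have rX: "right_ideal (X i)" for i using X(1) by (simp add: ideal_interval_def)
    have "X i \<inter> B \<in> ideal_interval A B" for i
      using X(1)[of i] Suc.prems(4,6) right_ideal_Int by (auto simp: ideal_interval_def)
    moreover have "X (Suc i) \<inter> B \<subseteq> X i \<inter> B" for i using X(2) by blast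
    ultimately obtain N1 where N1: "\<And>i. i \<ge> N1 \<Longrightarrow> kd_le k (X (Suc i) \<inter> B) (X i \<inter> B)"
      using kd_le_SucD[of k A B "\<lambda>i. X i \<inter> B", OF Suc.prems(1)] by blast
    have "X i + B \<in> ideal_interval B C" for i
    proof -
      have "X i + B \<subseteq> C"
        using X(1)[of i] Suc.prems(5,7) by (intro set_plus_subset_right_ideal) (auto simp: ideal_interval_def)
      then show ?thesis
        using right_ideal_set_plus[OF rX Suc.prems(4)] subset_set_plus_right[OF rX]
        by (simp add: ideal_interval_def)
    qed
    moreover have "X (Suc i) + B \<subseteq> X i + B" for i using X(2) by (rule set_plus_mono2) simp
    ultimately obtain N2 where N2: "\<And>i. i \<ge> N2 \<Longrightarrow> kd_le k (X (Suc i) + B) (X i + B)"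
      using kd_le_SucD[of k B C "\<lambda>i. X i + B", OF Suc.prems(2)] by blast
    have "kd_le k (X (Suc i)) (X i)" if i: "i \<ge> max N1 N2" for i
    proof -
      define D where "D = X (Suc i) + (X i \<inter> B)"
      have rD: "right_ideal D"
        unfolding D_def using rX Suc.prems(4) by (intro right_ideal_set_plus right_ideal_Int)
      have D_lower: "X (Suc i) \<subseteq> D"
        unfolding D_def using rX Suc.prems(4) by (intro subset_set_plus_left right_ideal_Int)
      have D_upper: "D \<subseteq> X i"
        unfolding D_def using rX X(2) by (intro set_plus_subset_right_ideal) auto
      have "kd_le k (X (Suc i)) D"
      proof (rule kd_le_Int_embedding[OF N1 rX rD Suc.prems(4) D_lower])
        show "D \<subseteq> X (Suc i) + B" unfolding D_def by (rule set_plus_mono2) auto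
      qed (use i D_upper in auto)
      moreover have "kd_le k D (X i)"
      proof (rule kd_le_plus_embedding[OF N2 rD rX Suc.prems(4) D_upper])
        show "X i \<inter> B \<subseteq> D" unfolding D_def by (rule subset_set_plus_right[OF rX])
        show "X (Suc i) + B \<subseteq> D + B" using D_lower by (rule set_plus_mono2) simp
      qed (use i in auto)
      ultimately show ?thesis using Suc.IH rX rD D_lower D_upper by blast
    qed
    then show "\<exists>N. \<forall>i\<ge>N. kd_le k (X (Suc i)) (X i)" by blast
  qed
qed

lemma kd_le_set_plus:
  assumes "kd_le j Q A" "kd_le j Q B" "right_ideal Q" "right_ideal A" "right_ideal B"
    and "Q \<subseteq> A" "Q \<subseteq> B"
  shows "kd_le j Q (A + B)"
proof (rule kd_le_extension[OF assms(1) _ assms(3,4) _ assms(6)])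
  show "right_ideal (A + B)" using assms(4,5) by (rule right_ideal_set_plus)
  show "A \<subseteq> A + B" using assms(5) by (rule subset_set_plus_left)
  then show "kd_le j A (A + B)"
    using assms(2,4-7) \<open>right_ideal (A + B)\<close>
    by (intro kd_le_Int_embedding[where B = B, OF assms(2)]) auto
qed

lemma kd_le_Int:
  assumes "kd_le j A J" "kd_le j B J" "right_ideal A" "right_ideal B" "right_ideal J"
    and "A \<subseteq> J" "B \<subseteq> J"
  shows "kd_le j (A \<inter> B) J"
proof (rule kd_le_extension[OF _ assms(1) _ assms(3,5) _ assms(6)])
  show "right_ideal (A \<inter> B)" using assms(3,4) by (rule right_ideal_Int)
  then show "kd_le j (A \<inter> B) A"
    using assms(3-7) subset_set_plus_right[of "A \<inter> B" B] set_plus_subset_right_ideal[of J A B]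
    by (intro kd_le_plus_embedding[where B = B, OF assms(2)]) auto
qed auto

text \<open>Left multiplication by \<open>x\<close> identifies \<open>R/A\<close> with a subquotient of \<open>(xR + Q)/Q\<close>
  as soon as \<open>A\<close> contains \<open>{a. xa \<in> Q}\<close>; conversely \<open>(sK + P)/P\<close> is a quotient of \<open>K\<close>.\<close>

lemma kd_le_left_mult_preimage:
  assumes "kd_le j I J" "right_ideal Q" "right_ideal A" "{a. x * a \<in> Q} \<subseteq> A"
    and "I \<subseteq> x *o A + Q" "x *o UNIV + Q \<subseteq> J"
  shows "kd_le j A UNIV"
proof (rule kd_le_order_embedding[where f = "\<lambda>Y. x *o Y + Q", OF assms(1) _ assms(3) right_ideal_UNIV])
  show "mono (\<lambda>Y. x *o Y + Q)" by (simp add: mono_def set_plus_mono2 set_times_mono)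
  show "right_ideal (x *o Y + Q)" if "Y \<in> ideal_interval A UNIV" for Y
    using that assms(2) by (simp add: ideal_interval_def right_ideal_set_plus right_ideal_elt_set_times)
  show "Y \<subseteq> Z" if Y: "Y \<in> ideal_interval A UNIV" and Z: "Z \<in> ideal_interval A UNIV"
    and YZ: "x *o Y + Q \<subseteq> x *o Z + Q" for Y Z
  proof
    fix a assume "a \<in> Y"
    then have "x * a + 0 \<in> x *o Y + Q" using right_ideal_zero[OF assms(2)] by (intro set_plus_intro) auto
    then have "x * a \<in> x *o Z + Q" using YZ by auto
    then obtain b q where bq: "x * a = x * b + q" "b \<in> Z" "q \<in> Q"
      by (auto elim!: set_plus_elim elt_set_timesE)
    then have "x * (a - b) \<in> Q" by (simp add: right_diff_distrib)
    then have "a - b \<in> Z" using assms(4) Z by (auto simp: ideal_interval_def)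
    then show "a \<in> Z" using bq(2) Z right_ideal_add[of Z "a - b" b] by (simp add: ideal_interval_def)
  qed
qed (use assms(5,6) in auto)

lemma kd_le_left_mult_image:
  assumes "kd_le j (K \<inter> {k. s * k \<in> P}) K" "right_ideal P" "right_ideal K"
  shows "kd_le j P (s *o K + P)"
proof (rule kd_le_order_embedding[where f = "\<lambda>Y. K \<inter> {k. s * k \<in> Y}", OF assms(1) _ assms(2)])
  show "right_ideal (s *o K + P)"
    using assms(2,3) by (simp add: right_ideal_set_plus right_ideal_elt_set_times)
  show "P \<subseteq> s *o K + P"
    using assms(3) by (simp add: subset_set_plus_right right_ideal_elt_set_times)
  show "mono (\<lambda>Y. K \<inter> {k. s * k \<in> Y})" by (auto simp: mono_def)
  show "right_ideal (K \<inter> {k. s * k \<in> Y})" if "Y \<in> ideal_interval P (s *o K + P)" for Y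
    using that assms(3) by (simp add: ideal_interval_def right_ideal_Int right_ideal_preimage)
  show "Y \<subseteq> Z" if Y: "Y \<in> ideal_interval P (s *o K + P)" and Z: "Z \<in> ideal_interval P (s *o K + P)"
    and YZ: "K \<inter> {k. s * k \<in> Y} \<subseteq> K \<inter> {k. s * k \<in> Z}" for Y Z
  proof
    fix a assume a: "a \<in> Y"
    then have "a \<in> s *o K + P" using Y by (auto simp: ideal_interval_def)
    then obtain k q where kq: "a = s * k + q" "k \<in> K" "q \<in> P"
      by (auto elim!: set_plus_elim elt_set_timesE)
    have "a - q \<in> Y" using a kq(3) Y right_ideal_diff[of Y a q] by (auto simp: ideal_interval_def)
    then have "s * k \<in> Z" using kq YZ by auto
    then show "a \<in> Z" using kq Z right_ideal_add[of Z "s * k" q] by (auto simp: ideal_interval_def)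
  qed
qed simp_all

section \<open>Prime ideals of right noetherian rings\<close>

lemma two_sided_ideal_right_ideal: "two_sided_ideal P \<Longrightarrow> right_ideal P"
  by (simp add: two_sided_ideal_def)

lemma two_sided_ideal_mult_left: "two_sided_ideal P \<Longrightarrow> x \<in> P \<Longrightarrow> r * x \<in> P"
  by (simp add: two_sided_ideal_def)

lemma prime_ideal_two_sided: "prime_ideal P \<Longrightarrow> two_sided_ideal P"
  by (simp add: prime_ideal_def)

lemma two_sided_idealI:
  assumes "0 \<in> I" "\<And>x y. x \<in> I \<Longrightarrow> y \<in> I \<Longrightarrow> x + y \<in> I" "\<And>x. x \<in> I \<Longrightarrow> - x \<in> I"
    and "\<And>x r. x \<in> I \<Longrightarrow> x * r \<in> I" "\<And>x r. x \<in> I \<Longrightarrow> r * x \<in> I"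
  shows "two_sided_ideal I"
  using assms by (simp add: two_sided_ideal_def right_ideal_def)

lemma prime_ideal_elementwise:
  assumes P: "prime_ideal P" and xy: "\<And>r. x * r * y \<in> P"
  shows "x \<in> P \<or> y \<in> P"
proof -
  have tP: "two_sided_ideal P" and rP: "right_ideal P"
    using P by (simp_all add: prime_ideal_two_sided two_sided_ideal_right_ideal)
  define A where "A = {a. \<forall>r. a * r * y \<in> P}"
  define B where "B = {b. \<forall>a\<in>A. a * b \<in> P}"
  have A_mult_right: "a * s \<in> A" if "a \<in> A" for a s
  proof -
    have "a * (s * r) * y \<in> P" for r using that by (simp add: A_def)
    then show ?thesis by (simp add: A_def mult.assoc)
  qed
  have "two_sided_ideal A"
  proof (rule two_sided_idealI)
    show "0 \<in> A" using right_ideal_zero[OF rP] by (simp add: A_def)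
    show "a + a' \<in> A" if "a \<in> A" "a' \<in> A" for a a'
      using that right_ideal_add[OF rP] by (simp add: A_def distrib_right)
    show "- a \<in> A" if "a \<in> A" for a
      using that right_ideal_minus[OF rP] by (simp add: A_def)
    show "a * s \<in> A" if "a \<in> A" for a s using that by (rule A_mult_right)
    show "s * a \<in> A" if "a \<in> A" for a s
      using that two_sided_ideal_mult_left[OF tP] by (simp add: A_def mult.assoc)
  qed
  moreover have "two_sided_ideal B"
  proof (rule two_sided_idealI)
    show "0 \<in> B" using right_ideal_zero[OF rP] by (simp add: B_def)
    show "b + b' \<in> B" if "b \<in> B" "b' \<in> B" for b b'
      using that right_ideal_add[OF rP] by (simp add: B_def distrib_left)
    show "- b \<in> B" if "b \<in> B" for b
      using that right_ideal_minus[OF rP] by (simp add: B_def)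
    show "b * s \<in> B" if "b \<in> B" for b s
      using that right_ideal_mult_right[OF rP] by (simp add: B_def flip: mult.assoc)
    show "s * b \<in> B" if "b \<in> B" for b s
      using that A_mult_right by (simp add: B_def flip: mult.assoc)
  qed
  moreover have "\<forall>a\<in>A. \<forall>b\<in>B. a * b \<in> P" by (simp add: B_def)
  ultimately have "A \<subseteq> P \<or> B \<subseteq> P" using P by (simp add: prime_ideal_def)
  moreover have "x \<in> A" using xy by (simp add: A_def)
  moreover have "y \<in> B"
  proof -
    have "a * 1 * y \<in> P" if "a \<in> A" for a using that by (simp only: A_def mem_Collect_eq)
    then show ?thesis by (simp add: B_def)
  qed
  ultimately show ?thesis by blast
qed

lemma right_noetherian_chain_stable:
  assumes "right_noetherian TYPE('a::ring_1)" "\<And>i. right_ideal (C i :: 'a set)"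
    and "\<And>i. C i \<subseteq> C (Suc i)"
  shows "\<exists>N. \<forall>i\<ge>N. C i = C N"
  using assms unfolding right_noetherian_def by blast

lemma right_noetherian_maximal:
  assumes "right_noetherian TYPE('a::ring_1)" "F \<noteq> {}" "\<And>A. A \<in> F \<Longrightarrow> right_ideal (A :: 'a set)"
  obtains M where "M \<in> F" "\<And>A. A \<in> F \<Longrightarrow> M \<subseteq> A \<Longrightarrow> A = M"
proof -
  have "\<exists>M\<in>F. \<forall>A\<in>F. M \<subseteq> A \<longrightarrow> A = M"
  proof (rule ccontr)
    assume "\<not> (\<exists>M\<in>F. \<forall>A\<in>F. M \<subseteq> A \<longrightarrow> A = M)"
    then have step: "\<exists>A. A \<in> F \<and> M \<subset> A" if "M \<in> F" for M using that by blast
    define next_ideal where "next_ideal M = (SOME A. A \<in> F \<and> M \<subset> A)" for M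
    have next_ideal: "next_ideal M \<in> F \<and> M \<subset> next_ideal M" if "M \<in> F" for M
      unfolding next_ideal_def using step[OF that] by (rule someI_ex)
    obtain M0 where "M0 \<in> F" using assms(2) by blast
    define C where "C n = (next_ideal ^^ n) M0" for n
    have CF: "C n \<in> F" for n
      by (induction n) (simp_all add: C_def \<open>M0 \<in> F\<close> next_ideal)
    have C_strict: "C n \<subset> C (Suc n)" for n
      using next_ideal[OF CF[of n]] by (simp add: C_def)
    have "\<And>i. right_ideal (C i)" "\<And>i. C i \<subseteq> C (Suc i)"
      using CF assms(3) C_strict by auto
    then obtain N where "\<forall>i\<ge>N. C i = C N"
      using right_noetherian_chain_stable[OF assms(1)] by blast
    then have "C (Suc N) = C N" using le_SucI by blast
    then show False using C_strict[of N] by simp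
  qed
  then show thesis using that by blast
qed

lemma power_mult_shift: "(x * r) ^ n * x = x * (r * x) ^ n" for x r :: "'a::monoid_mult"
  by (induction n) (simp_all add: mult.assoc)

text \<open>A left ideal of \<open>R/P\<close> consisting of nilpotent elements is zero: an element \<open>x \<notin> P\<close>
  with maximal right annihilator would satisfy \<open>xRx \<subseteq> P\<close>.\<close>

lemma nil_left_ideal_mod_prime:
  assumes N: "right_noetherian TYPE('a::ring_1)" and P: "prime_ideal (P :: 'a set)"
    and L_left: "\<And>r z. z \<in> L \<Longrightarrow> r * z \<in> L" and L_nil: "\<And>z. z \<in> L \<Longrightarrow> \<exists>n. z ^ n \<in> P"
  shows "L \<subseteq> P"
proof (rule ccontr)
  assume "\<not> L \<subseteq> P"
  have tP: "two_sided_ideal P" and rP: "right_ideal P"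
    using P by (simp_all add: prime_ideal_two_sided two_sided_ideal_right_ideal)
  define F where "F = {{w. x * w \<in> P} | x. x \<in> L \<and> x \<notin> P}"
  have "F \<noteq> {}" using \<open>\<not> L \<subseteq> P\<close> by (auto simp: F_def)
  moreover have "\<And>A. A \<in> F \<Longrightarrow> right_ideal A" using right_ideal_preimage[OF rP] by (auto simp: F_def)
  ultimately obtain M where M: "M \<in> F" "\<And>A. A \<in> F \<Longrightarrow> M \<subseteq> A \<Longrightarrow> A = M"
    using right_noetherian_maximal[OF N] by blast
  then obtain x where x: "M = {w. x * w \<in> P}" "x \<in> L" "x \<notin> P" by (auto simp: F_def)
  have "x * r * x \<in> P" for r
  proof (rule ccontr)
    assume xrx: "x * r * x \<notin> P"
    obtain n where "(r * x) ^ n \<in> P" using L_nil[OF L_left[OF x(2)]] by blast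
    then have "(x * r) ^ n * x \<in> P"
      using two_sided_ideal_mult_left[OF tP] by (simp add: power_mult_shift)
    then obtain j where j: "(x * r) ^ j * x \<in> P" "\<And>i. i < j \<Longrightarrow> (x * r) ^ i * x \<notin> P"
      using exists_least_iff[of "\<lambda>j. (x * r) ^ j * x \<in> P"] by blast
    obtain k where k: "j = Suc k" using j(1) x(3) by (cases j) auto
    define y where "y = (x * r) ^ k * x"
    have "{w. y * w \<in> P} \<in> F" using j(2)[of k] k x(2) L_left by (auto simp: F_def y_def)
    moreover have "M \<subseteq> {w. y * w \<in> P}"
      using x(1) two_sided_ideal_mult_left[OF tP] by (auto simp: y_def mult.assoc)
    ultimately have M_eq: "{w. y * w \<in> P} = M" using M(2) by blast
    have "y * (r * x) = (x * r) ^ j * x" by (simp only: k y_def power_Suc2 mult.assoc)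
    then have "r * x \<in> {w. y * w \<in> P}" using j(1) by simp
    then have "r * x \<in> M" using M_eq by simp
    then show False using x(1) xrx by (simp add: mult.assoc)
  qed
  then show False using prime_ideal_elementwise[OF P] x(3) by blast
qed

lemma right_ideal_not_nil_mod_prime:
  assumes N: "right_noetherian TYPE('a::ring_1)" and P: "prime_ideal (P :: 'a set)"
    and "right_ideal K" "\<not> K \<subseteq> P"
  shows "\<exists>a\<in>K. \<forall>n. a ^ n \<notin> P"
proof (rule ccontr)
  assume "\<not> ?thesis"
  then have K_nil: "\<exists>n. a ^ n \<in> P" if "a \<in> K" for a using that by blast
  obtain a where a: "a \<in> K" "a \<notin> P" using assms(4) by blast
  have "{s * a | s. True} \<subseteq> P"
  proof (rule nil_left_ideal_mod_prime[OF N P])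
    show "r * z \<in> {s * a | s. True}" if z: "z \<in> {s * a | s. True}" for r z
    proof -
      obtain s where "z = s * a" using z by blast
      then show ?thesis by (auto simp: mult.assoc intro: exI[of _ "r * s"])
    qed
    show "\<exists>n. z ^ n \<in> P" if z: "z \<in> {s * a | s. True}" for z
    proof -
      obtain s where z: "z = s * a" using z by blast
      obtain n where "(a * s) ^ n \<in> P" using K_nil right_ideal_mult_right[OF assms(3) a(1)] by blast
      then have "s * ((a * s) ^ n * a) \<in> P"
        using P by (simp add: prime_ideal_two_sided two_sided_ideal_mult_left right_ideal_mult_right
            two_sided_ideal_right_ideal flip: mult.assoc)
      then have "(s * a) ^ Suc n \<in> P" by (simp add: power_mult_shift mult.assoc)
      then show ?thesis unfolding z by blast
    qed
  qed
  moreover have "1 * a \<in> {s * a | s. True}" by blast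
  ultimately show False using a(2) by auto
qed

section \<open>Goldie's theorem\<close>

lemma power_annihilator_stable:
  assumes N: "right_noetherian TYPE('a::ring_1)" and tP: "two_sided_ideal (P :: 'a set)"
  obtains k where "k > 0" "\<And>y. a ^ k * (a ^ k * y) \<in> P \<Longrightarrow> a ^ k * y \<in> P"
proof -
  define C where "C i = {z. a ^ i * z \<in> P}" for i
  have "right_ideal (C i)" for i
    unfolding C_def using tP by (simp add: two_sided_ideal_right_ideal right_ideal_preimage)
  moreover have "C i \<subseteq> C (Suc i)" for i
    unfolding C_def using two_sided_ideal_mult_left[OF tP, of _ a] by (auto simp: mult.assoc)
  ultimately obtain N0 where N0: "\<forall>i\<ge>N0. C i = C N0"
    using right_noetherian_chain_stable[OF N] by blast
  have "C (Suc N0 + Suc N0) = C N0" "C (Suc N0) = C N0" by (rule N0[rule_format], simp)+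
  then have "C (Suc N0 + Suc N0) = C (Suc N0)" by simp
  moreover have "y \<in> C (Suc N0 + Suc N0)" if "a ^ Suc N0 * (a ^ Suc N0 * y) \<in> P" for y
    using that by (simp only: C_def power_add mult.assoc mem_Collect_eq)
  ultimately have "a ^ Suc N0 * (a ^ Suc N0 * y) \<in> P \<Longrightarrow> a ^ Suc N0 * y \<in> P" for y
    by (simp add: C_def)
  then show thesis using that[of "Suc N0"] by blast
qed

definition left_regular_mod :: "'a::ring_1 set \<Rightarrow> 'a \<Rightarrow> bool" where
  "left_regular_mod P c \<longleftrightarrow> (\<forall>x. c * x \<in> P \<longrightarrow> x \<in> P)"

definition essential_over :: "'a::ring_1 set \<Rightarrow> 'a set \<Rightarrow> bool" where
  "essential_over P E \<longleftrightarrow> (\<forall>K. right_ideal K \<longrightarrow> P \<subseteq> K \<longrightarrow> K \<inter> E \<subseteq> P \<longrightarrow> K \<subseteq> P)"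

text \<open>A list \<open>b\<^sub>k, \<dots>, b\<^sub>1\<close> (newest first) of elements of \<open>E\<close> such that each \<open>b\<^sub>i\<close> is killed on
  the left by its predecessors and \<open>b\<^sub>iR \<inter> r.ann(b\<^sub>i) \<subseteq> P\<close>.  The right ideals \<open>b\<^sub>iR\<close> are then
  independent modulo \<open>P\<close>, so a list whose \<open>principal_sum\<close> is maximal yields the left regular element
  \<open>b\<^sub>1 + \<dots> + b\<^sub>k\<close> of \<open>E\<close>.\<close>

fun right_ann_list :: "'a::ring_1 set \<Rightarrow> 'a list \<Rightarrow> 'a set" where
  "right_ann_list P [] = UNIV"
| "right_ann_list P (b # bs) = right_ann_list P bs \<inter> {x. b * x \<in> P}"

fun principal_sum :: "'a::ring_1 set \<Rightarrow> 'a list \<Rightarrow> 'a set" where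
  "principal_sum P [] = P"
| "principal_sum P (b # bs) = principal_sum P bs + b *o UNIV"

fun independent_mod :: "'a::ring_1 set \<Rightarrow> 'a set \<Rightarrow> 'a list \<Rightarrow> bool" where
  "independent_mod P E [] \<longleftrightarrow> True"
| "independent_mod P E (b # bs) \<longleftrightarrow> independent_mod P E bs \<and> b \<in> E \<and> b \<in> right_ann_list P bs
     \<and> b \<notin> P \<and> (\<forall>y. b * (b * y) \<in> P \<longrightarrow> b * y \<in> P)"

lemma right_ideal_right_ann_list: "right_ideal P \<Longrightarrow> right_ideal (right_ann_list P bs)"
  by (induction bs) (simp_all add: right_ideal_UNIV right_ideal_Int right_ideal_preimage)

lemma subset_right_ann_list: "two_sided_ideal P \<Longrightarrow> P \<subseteq> right_ann_list P bs"
  by (induction bs) (auto simp: two_sided_ideal_mult_left)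

lemma right_ideal_principal_sum: "right_ideal P \<Longrightarrow> right_ideal (principal_sum P bs)"
  by (induction bs) (simp_all add: right_ideal_set_plus right_ideal_elt_set_times right_ideal_UNIV)

lemma principal_sum_Cons_mono: "principal_sum P bs \<subseteq> principal_sum P (b # bs)"
  by (simp add: subset_set_plus_left right_ideal_elt_set_times right_ideal_UNIV)

lemma principal_sum_Int_right_ann_list:
  assumes tP: "two_sided_ideal P" and "independent_mod P E bs"
  shows "principal_sum P bs \<inter> right_ann_list P bs \<subseteq> P"
  using assms(2)
proof (induction bs)
  case Nil
  then show ?case by simp
next
  case (Cons b bs)
  have rP: "right_ideal P" and rD: "right_ideal (right_ann_list P bs)"
    using tP by (simp_all add: two_sided_ideal_right_ideal right_ideal_right_ann_list)
  have b: "independent_mod P E bs" "b \<in> right_ann_list P bs" "\<And>y. b * (b * y) \<in> P \<Longrightarrow> b * y \<in> P"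
    using Cons.prems by auto
  show ?case
  proof
    fix u assume u: "u \<in> principal_sum P (b # bs) \<inter> right_ann_list P (b # bs)"
    then obtain v s where vs: "u = v + b * s" "v \<in> principal_sum P bs"
      by (auto elim!: set_plus_elim elt_set_timesE)
    have "v = u - b * s" using vs(1) by simp
    then have "v \<in> right_ann_list P bs"
      using u right_ideal_diff[OF rD] right_ideal_mult_right[OF rD b(2)] by auto
    then have "v \<in> P" using Cons.IH[OF b(1)] vs(2) by blast
    have "b * u \<in> P" using u by simp
    moreover have "b * (b * s) = b * u - b * v" using vs(1) by (simp add: distrib_left)
    ultimately have "b * (b * s) \<in> P"
      using right_ideal_diff[OF rP _ two_sided_ideal_mult_left[OF tP \<open>v \<in> P\<close>]] by simp
    then show "u \<in> P" using b(3) vs(1) \<open>v \<in> P\<close> right_ideal_add[OF rP] by blast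
  qed
qed

lemma sum_list_mult_mem_principal_sum: "right_ideal P \<Longrightarrow> sum_list bs * x \<in> principal_sum P bs"
proof (induction bs)
  case Nil
  then show ?case by (simp add: right_ideal_zero)
next
  case (Cons b bs)
  then have "sum_list bs * x + b * x \<in> principal_sum P bs + b *o UNIV" by blast
  then show ?case by (simp add: distrib_right add.commute)
qed

lemma independent_mod_sum_list_mem: "right_ideal E \<Longrightarrow> independent_mod P E bs \<Longrightarrow> sum_list bs \<in> E"
  by (induction bs) (simp_all add: right_ideal_zero right_ideal_add)

lemma independent_mod_sum_list_mult:
  assumes tP: "two_sided_ideal P" and "independent_mod P E bs" "sum_list bs * x \<in> P"
  shows "x \<in> right_ann_list P bs"
  using assms(2,3)
proof (induction bs)
  case Nil
  then show ?case by simp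
next
  case (Cons b bs)
  have rP: "right_ideal P" and rD: "right_ideal (right_ann_list P bs)"
    using tP by (simp_all add: two_sided_ideal_right_ideal right_ideal_right_ann_list)
  have b: "independent_mod P E bs" "b \<in> right_ann_list P bs" using Cons.prems by auto
  have sum: "b * x + sum_list bs * x \<in> P" using Cons.prems(2) by (simp add: distrib_right)
  then have "b * x + sum_list bs * x \<in> right_ann_list P bs" using subset_right_ann_list[OF tP] by blast
  then have "sum_list bs * x \<in> right_ann_list P bs"
    using right_ideal_diff[OF rD _ right_ideal_mult_right[OF rD b(2)], of _ x] by force
  then have "sum_list bs * x \<in> P"
    using principal_sum_Int_right_ann_list[OF tP b(1)] sum_list_mult_mem_principal_sum[OF rP] by blast
  moreover from this have "x \<in> right_ann_list P bs" using Cons.IH[OF b(1)] by blast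
  ultimately show ?case using right_ideal_diff[OF rP sum] by force
qed

lemma independent_mod_extend:
  assumes N: "right_noetherian TYPE('a::ring_1)" and P: "prime_ideal (P :: 'a set)"
    and "right_ideal E" "essential_over P E" "independent_mod P E bs"
    and "\<not> right_ann_list P bs \<subseteq> P"
  obtains b where "independent_mod P E (b # bs)"
proof -
  have tP: "two_sided_ideal P" and rP: "right_ideal P"
    using P by (simp_all add: prime_ideal_two_sided two_sided_ideal_right_ideal)
  define K where "K = E \<inter> right_ann_list P bs"
  have rK: "right_ideal K"
    unfolding K_def using assms(3) right_ideal_right_ann_list[OF rP] by (rule right_ideal_Int)
  have "\<not> K \<subseteq> P"
  proof
    assume "K \<subseteq> P"
    then have "right_ann_list P bs \<subseteq> P"
      using assms(4) right_ideal_right_ann_list[OF rP] subset_right_ann_list[OF tP]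
      unfolding essential_over_def K_def by blast
    then show False using assms(6) by blast
  qed
  then obtain a where a: "a \<in> K" "\<forall>n. a ^ n \<notin> P"
    using right_ideal_not_nil_mod_prime[OF N P rK] by blast
  obtain k where k: "k > 0" "\<And>y. a ^ k * (a ^ k * y) \<in> P \<Longrightarrow> a ^ k * y \<in> P"
    using power_annihilator_stable[OF N tP] by blast
  have "a ^ k \<in> K"
    using k(1) right_ideal_mult_right[OF rK a(1)] by (cases k) (simp_all add: power_Suc)
  then have "independent_mod P E (a ^ k # bs)"
    using assms(5) a(2) k(2) by (simp add: K_def)
  then show thesis by (rule that)
qed

lemma essential_over_left_regular:
  assumes N: "right_noetherian TYPE('a::ring_1)" and P: "prime_ideal (P :: 'a set)"
    and E: "right_ideal E" "essential_over P E"
  obtains c where "c \<in> E" "left_regular_mod P c"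
proof -
  have tP: "two_sided_ideal P" and rP: "right_ideal P"
    using P by (simp_all add: prime_ideal_two_sided two_sided_ideal_right_ideal)
  define F where "F = {principal_sum P bs | bs. independent_mod P E bs}"
  have "principal_sum P [] \<in> F" unfolding F_def by fastforce
  moreover have "\<And>A. A \<in> F \<Longrightarrow> right_ideal A" using right_ideal_principal_sum[OF rP] by (auto simp: F_def)
  ultimately obtain M where M: "M \<in> F" "\<And>A. A \<in> F \<Longrightarrow> M \<subseteq> A \<Longrightarrow> A = M"
    using right_noetherian_maximal[OF N] by blast
  then obtain bs where bs: "M = principal_sum P bs" "independent_mod P E bs" by (auto simp: F_def)
  have "right_ann_list P bs \<subseteq> P"
  proof (rule ccontr)
    assume "\<not> right_ann_list P bs \<subseteq> P"
    then obtain b where b: "independent_mod P E (b # bs)"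
      using independent_mod_extend[OF N P E bs(2)] by blast
    then have "principal_sum P (b # bs) \<in> F" unfolding F_def by blast
    then have "principal_sum P (b # bs) = principal_sum P bs"
      using M(2) principal_sum_Cons_mono bs(1) by blast
    moreover have "0 + b * 1 \<in> principal_sum P (b # bs)"
      using right_ideal_zero[OF right_ideal_principal_sum[OF rP]] by (simp only: principal_sum.simps) blast
    ultimately have "b \<in> principal_sum P bs \<inter> right_ann_list P bs" using b by simp
    then show False using principal_sum_Int_right_ann_list[OF tP bs(2)] b by auto
  qed
  then have "left_regular_mod P (sum_list bs)"
    using independent_mod_sum_list_mult[OF tP bs(2)] by (auto simp: left_regular_mod_def)
  then show thesis using that independent_mod_sum_list_mem[OF E(1) bs(2)] by blast
qed

section \<open>Krull dimension modulo a prime\<close>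

lemma left_regular_mod_power:
  assumes "left_regular_mod P c"
  shows "left_regular_mod P (c ^ n)"
proof (induction n)
  case (Suc n)
  show ?case unfolding left_regular_mod_def
  proof (intro allI impI)
    fix x assume "c ^ Suc n * x \<in> P"
    then have "c * (c ^ n * x) \<in> P" by (simp add: mult.assoc)
    then have "c ^ n * x \<in> P" using assms by (simp add: left_regular_mod_def)
    then show "x \<in> P" using Suc.IH by (simp add: left_regular_mod_def)
  qed
qed (simp add: left_regular_mod_def)

lemma principal_power_decreasing: "c ^ Suc n *o A \<subseteq> c ^ n *o UNIV" for c :: "'a::monoid_mult"
proof
  fix u assume "u \<in> c ^ Suc n *o A"
  then obtain a where "u = c ^ Suc n * a" by (rule elt_set_timesE)
  then have "u = c ^ n * (c * a)" by (simp only: power_Suc2 mult.assoc)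
  then show "u \<in> c ^ n *o UNIV" by (simp add: set_times_intro2)
qed

text \<open>The successive factors of the descending chain \<open>c\<^sup>iR + P\<close> are images of \<open>R/(cR + P)\<close>
  under left multiplication by \<open>c\<^sup>i\<close>, injectively since \<open>c\<close> is left regular modulo \<open>P\<close>.\<close>

lemma kd_le_left_regular_principal:
  assumes tP: "two_sided_ideal P" and c: "left_regular_mod P c" and kd: "kd_le (Suc j) P UNIV"
  shows "kd_le j (c *o UNIV + P) UNIV"
proof -
  have rP: "right_ideal P" using tP by (rule two_sided_ideal_right_ideal)
  define C where "C i = c ^ i *o UNIV + P" for i
  have rC: "right_ideal (C i)" for i
    unfolding C_def using rP by (simp add: right_ideal_set_plus right_ideal_elt_set_times right_ideal_UNIV)
  have PC: "P \<subseteq> C i" for i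
    unfolding C_def by (simp add: subset_set_plus_right right_ideal_elt_set_times right_ideal_UNIV)
  have "C i \<in> ideal_interval P UNIV" for i using rC PC by (simp add: ideal_interval_def)
  moreover have "C (Suc i) \<subseteq> C i" for i
    unfolding C_def using principal_power_decreasing by (rule set_plus_mono2) simp
  ultimately obtain N where "\<And>i. i \<ge> N \<Longrightarrow> kd_le j (C (Suc i)) (C i)"
    using kd_le_SucD[OF kd, of C] by blast
  then have N: "kd_le j (C (Suc N)) (C N)" by simp
  have "kd_le j (C 1) UNIV"
  proof (rule kd_le_left_mult_preimage[OF N rP rC[of 1]])
    show "{a. c ^ N * a \<in> P} \<subseteq> C 1"
      using left_regular_mod_power[OF c, of N] PC[of 1] by (auto simp: left_regular_mod_def)
    have "c ^ Suc N *o UNIV = c ^ N *o (c *o UNIV)"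
      by (simp only: set_times_rearrange2 power_Suc2)
    also have "\<dots> \<subseteq> c ^ N *o C 1"
      by (rule set_times_mono) (simp add: C_def subset_set_plus_left rP)
    finally show "C (Suc N) \<subseteq> c ^ N *o C 1 + P"
      unfolding C_def by (rule set_plus_mono2) simp
  qed (simp add: C_def)
  then show ?thesis by (simp add: C_def)
qed

text \<open>Over a prime \<open>P\<close>, every nonzero right ideal \<open>K/P\<close> of \<open>R/P\<close> bounds the Krull dimension of
  \<open>R/P\<close>: a maximal \<open>M \<supseteq> K\<close> with \<open>|M/P| \<le> |K/P|\<close> absorbs every \<open>sK\<close>, hence is essential
  modulo \<open>P\<close>, and left multiplication by a left regular element of \<open>M\<close> embeds \<open>R/P\<close> into \<open>M/P\<close>.\<close>

lemma kd_le_prime_of_right_ideal: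
  assumes N: "right_noetherian TYPE('a::ring_1)" and P: "prime_ideal (P :: 'a set)"
    and K: "right_ideal K" "P \<subseteq> K" "\<not> K \<subseteq> P" and kd: "kd_le j P K"
  shows "kd_le j P UNIV"
proof -
  have tP: "two_sided_ideal P" and rP: "right_ideal P"
    using P by (simp_all add: prime_ideal_two_sided two_sided_ideal_right_ideal)
  define F where "F = {M. right_ideal M \<and> K \<subseteq> M \<and> kd_le j P M}"
  have "K \<in> F" using K(1) kd by (simp add: F_def)
  moreover have "\<And>A. A \<in> F \<Longrightarrow> right_ideal A" by (simp add: F_def)
  ultimately obtain M where M: "M \<in> F" "\<And>A. A \<in> F \<Longrightarrow> M \<subseteq> A \<Longrightarrow> A = M"
    using right_noetherian_maximal[OF N, of F] by blast
  have rM: "right_ideal M" and KM: "K \<subseteq> M" and kdM: "kd_le j P M" using M(1) by (auto simp: F_def)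
  have sK_M: "s *o K \<subseteq> M" for s
  proof -
    have rS: "right_ideal (s *o K + P)" using K(1) rP by (simp add: right_ideal_set_plus right_ideal_elt_set_times)
    have "P \<subseteq> K \<inter> {k. s * k \<in> P}" using K(2) two_sided_ideal_mult_left[OF tP] by blast
    then have "kd_le j (K \<inter> {k. s * k \<in> P}) K"
      using kd_le_subinterval[OF kd] K(1) right_ideal_Int[OF K(1) right_ideal_preimage[OF rP]] by blast
    then have "kd_le j P (s *o K + P)" using rP K(1) by (rule kd_le_left_mult_image)
    then have "kd_le j P ((s *o K + P) + M)"
    proof (rule kd_le_set_plus[OF _ kdM rP rS rM])
      show "P \<subseteq> s *o K + P" using K(1) by (simp add: subset_set_plus_right right_ideal_elt_set_times)
      show "P \<subseteq> M" using K(2) KM by (rule order.trans)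
    qed
    moreover have "M \<subseteq> (s *o K + P) + M" using rS by (rule subset_set_plus_right)
    moreover have "right_ideal ((s *o K + P) + M)" using rS rM by (rule right_ideal_set_plus)
    ultimately have "(s *o K + P) + M = M" using M(2) KM by (auto simp: F_def)
    moreover have "s *o K \<subseteq> (s *o K + P) + M"
      using subset_set_plus_left[OF rP] subset_set_plus_left[OF rM] by blast
    ultimately show ?thesis by simp
  qed
  have "essential_over P M"
    unfolding essential_over_def
  proof (intro allI impI subsetI)
    fix K' y assume K': "right_ideal K'" "P \<subseteq> K'" "K' \<inter> M \<subseteq> P" and y: "y \<in> K'"
    show "y \<in> P"
    proof (rule ccontr)
      assume "y \<notin> P"
      obtain f where f: "f \<in> K" "f \<notin> P" using K(3) by blast
      obtain r where r: "y * r * f \<notin> P" using prime_ideal_elementwise[OF P, of y f] \<open>y \<notin> P\<close> f(2) by blast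
      have "y * r * f \<in> K'" using right_ideal_mult_right[OF K'(1) y] by (simp add: mult.assoc)
      moreover have "y * r * f \<in> M" using sK_M[of "y * r"] set_times_intro2[OF f(1)] by blast
      ultimately show False using K'(3) r by blast
    qed
  qed
  then obtain c where c: "c \<in> M" "left_regular_mod P c"
    using essential_over_left_regular[OF N P rM] by blast
  show ?thesis
  proof (rule kd_le_left_mult_preimage[OF kdM rP rP])
    show "{a. c * a \<in> P} \<subseteq> P" using c(2) by (auto simp: left_regular_mod_def)
    show "P \<subseteq> c *o P + P" using rP by (simp add: subset_set_plus_right right_ideal_elt_set_times)
    have "c *o UNIV \<subseteq> M" using right_ideal_mult_right[OF rM c(1)] by (auto elim!: elt_set_timesE)
    then show "c *o UNIV + P \<subseteq> M" using rM KM K(2) by (intro set_plus_subset_right_ideal) auto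
  qed
qed

lemma essential_over_of_kd_le:
  assumes N: "right_noetherian TYPE('a::ring_1)" and P: "prime_ideal (P :: 'a set)"
    and "\<not> kd_le j P UNIV" "right_ideal J" "P \<subseteq> J" "kd_le j J UNIV"
  shows "essential_over P J"
  unfolding essential_over_def
proof (intro allI impI)
  fix K assume K: "right_ideal K" "P \<subseteq> K" "K \<inter> J \<subseteq> P"
  have rP: "right_ideal P" using P by (simp add: prime_ideal_two_sided two_sided_ideal_right_ideal)
  show "K \<subseteq> P"
  proof (rule ccontr)
    assume "\<not> K \<subseteq> P"
    have "kd_le j P K"
    proof (rule kd_le_plus_embedding[OF assms(6) rP K(1) assms(4) K(2) K(3)])
      show "J \<subseteq> P + J" using rP by (rule subset_set_plus_right)
    qed simp
    then show False using kd_le_prime_of_right_ideal[OF N P K(1,2) \<open>\<not> K \<subseteq> P\<close>] assms(3) by blast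
  qed
qed

lemma left_regular_mod_regular_mod:
  assumes N: "right_noetherian TYPE('a::ring_1)" and P: "prime_ideal (P :: 'a set)"
    and kd: "kd_le (Suc j) P UNIV" "\<not> kd_le j P UNIV" and c: "left_regular_mod P c"
  shows "c \<in> regular_mod P"
proof -
  have tP: "two_sided_ideal P" and rP: "right_ideal P"
    using P by (simp_all add: prime_ideal_two_sided two_sided_ideal_right_ideal)
  have "x \<in> P" if xc: "x * c \<in> P" for x
  proof (rule ccontr)
    assume "x \<notin> P"
    have "c *o UNIV + P \<subseteq> {y. x * y \<in> P}"
    proof
      fix z assume "z \<in> c *o UNIV + P"
      then obtain r q where z: "z = c * r + q" "q \<in> P" by (auto elim!: set_plus_elim elt_set_timesE)
      have "x * c * r + x * q \<in> P"
        using right_ideal_mult_right[OF rP xc] two_sided_ideal_mult_left[OF tP z(2)] by (rule right_ideal_add[OF rP])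
      then show "z \<in> {y. x * y \<in> P}" using z(1) by (simp add: distrib_left mult.assoc)
    qed
    with kd_le_left_regular_principal[OF tP c kd(1)]
    have "kd_le j (UNIV \<inter> {y. x * y \<in> P}) UNIV"
      using right_ideal_preimage[OF rP] right_ideal_UNIV by (auto intro: kd_le_subinterval)
    then have "kd_le j P (x *o UNIV + P)" using rP right_ideal_UNIV by (rule kd_le_left_mult_image)
    moreover have "right_ideal (x *o UNIV + P)"
      using rP by (simp add: right_ideal_set_plus right_ideal_elt_set_times right_ideal_UNIV)
    moreover have "P \<subseteq> x *o UNIV + P" by (simp add: subset_set_plus_right right_ideal_elt_set_times right_ideal_UNIV)
    moreover have "\<not> x *o UNIV + P \<subseteq> P"
    proof
      assume "x *o UNIV + P \<subseteq> P"
      moreover have "x * 1 + 0 \<in> x *o UNIV + P" using right_ideal_zero[OF rP] by blast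
      ultimately show False using \<open>x \<notin> P\<close> by auto
    qed
    ultimately show False using kd_le_prime_of_right_ideal[OF N P] kd(2) by blast
  qed
  moreover have "\<forall>x. c * x \<in> P \<longrightarrow> x \<in> P" using c unfolding left_regular_mod_def .
  ultimately show ?thesis unfolding regular_mod_def by blast
qed

lemma right_ideal_meets_regular_mod:
  assumes N: "right_noetherian TYPE('a::ring_1)" and P: "prime_ideal (P :: 'a set)"
    and kd: "kd_le (Suc j) P UNIV" "\<not> kd_le j P UNIV" and I: "right_ideal I" "kd_le j I UNIV"
  shows "I \<inter> regular_mod P \<noteq> {}"
proof -
  have rP: "right_ideal P" using P by (simp add: prime_ideal_two_sided two_sided_ideal_right_ideal)
  have rJ: "right_ideal (I + P)" using I(1) rP by (rule right_ideal_set_plus)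
  have "kd_le j (I + P) UNIV"
    using kd_le_subinterval[OF I(2) rJ right_ideal_UNIV subset_set_plus_left[OF rP]] by simp
  then have "essential_over P (I + P)"
    using essential_over_of_kd_le[OF N P kd(2) rJ subset_set_plus_right[OF I(1)]] by blast
  then obtain c where "c \<in> I + P" and c: "left_regular_mod P c"
    using essential_over_left_regular[OF N P rJ] by blast
  then obtain i q where iq: "c = i + q" "i \<in> I" "q \<in> P" by (auto elim: set_plus_elim)
  have "left_regular_mod P i"
    unfolding left_regular_mod_def
  proof (intro allI impI)
    fix x assume "i * x \<in> P"
    then have "i * x + q * x \<in> P" using right_ideal_add[OF rP _ right_ideal_mult_right[OF rP iq(3)]] by blast
    then have "c * x \<in> P" using iq(1) by (simp add: distrib_right)
    then show "x \<in> P" using c by (simp add: left_regular_mod_def)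
  qed
  then have "i \<in> regular_mod P" by (rule left_regular_mod_regular_mod[OF N P kd])
  then show ?thesis using iq(2) by blast
qed

section \<open>Gabriel filters\<close>

lemma regular_mod_mult:
  assumes "c \<in> regular_mod A" "d \<in> regular_mod A"
  shows "c * d \<in> regular_mod A"
proof -
  have c: "\<And>x. x * c \<in> A \<Longrightarrow> x \<in> A" "\<And>x. c * x \<in> A \<Longrightarrow> x \<in> A"
    and d: "\<And>x. x * d \<in> A \<Longrightarrow> x \<in> A" "\<And>x. d * x \<in> A \<Longrightarrow> x \<in> A"
    using assms unfolding regular_mod_def by blast+
  have "x \<in> A" if "x * (c * d) \<in> A" for x
    using that c(1) d(1) by (metis mult.assoc)
  moreover have "x \<in> A" if "c * d * x \<in> A" for x
    using that c(2) d(2) by (metis mult.assoc)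
  ultimately show ?thesis unfolding regular_mod_def by blast
qed

lemma gabriel_filterI:
  assumes "\<And>I. I \<in> F \<Longrightarrow> right_ideal I"
    and "\<And>I J. I \<in> F \<Longrightarrow> right_ideal J \<Longrightarrow> I \<subseteq> J \<Longrightarrow> J \<in> F"
    and "\<And>I J. I \<in> F \<Longrightarrow> J \<in> F \<Longrightarrow> I \<inter> J \<in> F"
    and "\<And>I x. I \<in> F \<Longrightarrow> {a. x * a \<in> I} \<in> F"
  shows "gabriel_filter F"
  using assms unfolding gabriel_filter_def by blast

lemma gabriel_filter_V_torsion:
  assumes V_mult: "\<And>c d. c \<in> V \<Longrightarrow> d \<in> V \<Longrightarrow> c * d \<in> V"
  shows "gabriel_filter {I. right_ideal I \<and> V_torsion_quot V I}"
proof (rule gabriel_filterI)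
  fix I J :: "'a set"
  assume "I \<in> {I. right_ideal I \<and> V_torsion_quot V I}" "right_ideal J" "I \<subseteq> J"
  then show "J \<in> {I. right_ideal I \<and> V_torsion_quot V I}" unfolding V_torsion_quot_def by blast
next
  fix I :: "'a set" and x
  assume "I \<in> {I. right_ideal I \<and> V_torsion_quot V I}"
  then have "\<exists>t\<in>V. y * t \<in> {a. x * a \<in> I}" for y
    unfolding V_torsion_quot_def by (simp flip: mult.assoc)
  then show "{a. x * a \<in> I} \<in> {I. right_ideal I \<and> V_torsion_quot V I}"
    using \<open>I \<in> _\<close> by (simp add: right_ideal_preimage V_torsion_quot_def)
next
  fix I J :: "'a set"
  assume I: "I \<in> {I. right_ideal I \<and> V_torsion_quot V I}"
    and J: "J \<in> {I. right_ideal I \<and> V_torsion_quot V I}"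
  have "\<exists>t\<in>V. x * t \<in> I \<inter> J" for x
  proof -
    obtain t where t: "t \<in> V" "x * t \<in> I" using I unfolding V_torsion_quot_def by blast
    obtain u where u: "u \<in> V" "x * t * u \<in> J" using J unfolding V_torsion_quot_def by blast
    have "x * t * u \<in> I" using I t(2) by (simp add: right_ideal_mult_right)
    then show ?thesis using u V_mult[OF t(1) u(1)] by (auto simp: mult.assoc)
  qed
  then show "I \<inter> J \<in> {I. right_ideal I \<and> V_torsion_quot V I}"
    using I J by (simp add: right_ideal_Int V_torsion_quot_def)
qed simp

lemma gabriel_filter_kd_le: "gabriel_filter {I. right_ideal I \<and> kd_le j I UNIV}"
proof (rule gabriel_filterI)
  fix I J :: "'a set"
  assume "I \<in> {I. right_ideal I \<and> kd_le j I UNIV}" "right_ideal J" "I \<subseteq> J"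
  then show "J \<in> {I. right_ideal I \<and> kd_le j I UNIV}"
    using kd_le_subinterval[of j I UNIV J UNIV] right_ideal_UNIV by blast
next
  fix I :: "'a set" and x
  assume I: "I \<in> {I. right_ideal I \<and> kd_le j I UNIV}"
  have rA: "right_ideal {a. x * a \<in> I}" using I by (simp add: right_ideal_preimage)
  have "kd_le j {a. x * a \<in> I} UNIV"
  proof (rule kd_le_left_mult_preimage[where Q = I and x = x and J = UNIV])
    show "I \<subseteq> x *o {a. x * a \<in> I} + I" using rA by (simp add: subset_set_plus_right right_ideal_elt_set_times)
  qed (use I rA in simp_all)
  then show "{a. x * a \<in> I} \<in> {I. right_ideal I \<and> kd_le j I UNIV}" using rA by blast
next
  fix I J :: "'a set"
  assume "I \<in> {I. right_ideal I \<and> kd_le j I UNIV}" "J \<in> {I. right_ideal I \<and> kd_le j I UNIV}"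
  then show "I \<inter> J \<in> {I. right_ideal I \<and> kd_le j I UNIV}"
    using kd_le_Int[of j I UNIV J] right_ideal_Int right_ideal_UNIV by blast
qed simp

lemma krull_dim_ge: "krull_dim I J \<ge> -1"
  by (simp add: krull_dim_def)

lemma krull_dim_less_iff:
  assumes "has_krull_dim I J" "m \<ge> 0"
  shows "krull_dim I J < m \<longleftrightarrow> kd_le (nat m) I J"
proof -
  define L where "L = (LEAST j. kd_le j I J)"
  have "kd_le L I J" using assms(1) unfolding L_def has_krull_dim_def by (rule LeastI_ex)
  moreover have "kd_le (nat m) I J \<Longrightarrow> L \<le> nat m" unfolding L_def by (rule Least_le)
  moreover have "krull_dim I J = int L - 1" by (simp add: krull_dim_def L_def)
  ultimately show ?thesis using assms(2) kd_le_mono[of L I J "nat m"] by auto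
qed

lemma has_krull_dim_right_ideal:
  fixes I :: "'a::ring_1 set"
  assumes "has_krull_dim ({0} :: 'a set) UNIV" "right_ideal I"
  shows "has_krull_dim I UNIV"
proof -
  obtain j where "kd_le j ({0} :: 'a set) UNIV" using assms(1) by (auto simp: has_krull_dim_def)
  then have "kd_le j I UNIV"
    by (rule kd_le_subinterval[OF _ assms(2) right_ideal_UNIV]) (simp_all add: right_ideal_zero[OF assms(2)])
  then show ?thesis by (auto simp: has_krull_dim_def)
qed

lemma krull_dim_less_meets_regular_mod:
  fixes I P :: "'a::ring_1 set"
  assumes N: "right_noetherian TYPE('a)" and hkd: "has_krull_dim ({0} :: 'a set) UNIV"
    and P: "prime_ideal P" "krull_dim P UNIV = m" and I: "right_ideal I" "krull_dim I UNIV < m"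
  shows "I \<inter> regular_mod P \<noteq> {}"
proof (rule right_ideal_meets_regular_mod[OF N P(1) _ _ I(1)])
  have m: "m \<ge> 0" using I(2) krull_dim_ge[of I UNIV] by linarith
  have "has_krull_dim P UNIV"
    using P(1) by (simp add: has_krull_dim_right_ideal[OF hkd] prime_ideal_two_sided two_sided_ideal_right_ideal)
  then show "kd_le (Suc (nat m)) P UNIV" "\<not> kd_le (nat m) P UNIV"
    using krull_dim_less_iff[of P UNIV "m + 1"] krull_dim_less_iff[of P UNIV m] P(2) m
    by (simp_all add: nat_add_distrib)
  show "kd_le (nat m) I UNIV" using I krull_dim_less_iff[OF has_krull_dim_right_ideal[OF hkd I(1)] m] by blast
qed

theorem mainTheorem6:
  fixes n m :: int and X :: "'a::ring_1 set set" and V :: "'a set"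
    and k w g :: "'a set set"
  assumes "prime_ring TYPE('a)"
    and "right_noetherian TYPE('a)"
    and "has_krull_dim ({0} :: 'a set) UNIV"
    and "krull_dim ({0} :: 'a set) UNIV = n"
    and "m \<le> n"
    and X_def: "X = {p \<in> Spec. krull_dim p UNIV = m}"
    and V_def: "V = (\<Inter>p\<in>X. regular_mod p)"
    and k_def: "k = {I. right_ideal I \<and> I \<inter> V \<noteq> {}}"
    and w_def: "w = {I. right_ideal I \<and> V_torsion_quot V I}"
    and g_def: "g = {I. right_ideal I \<and> krull_dim I UNIV < m}"
  shows "gabriel_filter w \<and> gabriel_filter g
         \<and> (right_intersection_condition X V \<longrightarrow> g \<subseteq> k)"
proof -
  note hkd = has_krull_dim_right_ideal[OF assms(3)]
  have g_kd: "g = {I. right_ideal I \<and> kd_le (nat m) I UNIV}" if "m \<ge> 0"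
    using krull_dim_less_iff[OF hkd that] by (auto simp: g_def)
  have "gabriel_filter w"
    unfolding w_def by (rule gabriel_filter_V_torsion) (simp add: V_def regular_mod_mult)
  moreover have "gabriel_filter g"
  proof (cases "m \<ge> 0")
    case False
    then have "\<not> krull_dim I UNIV < m" for I :: "'a set" using krull_dim_ge[of I UNIV] by linarith
    then have "g = {}" by (simp add: g_def)
    then show ?thesis by (simp add: gabriel_filter_def)
  qed (simp add: g_kd gabriel_filter_kd_le)
  moreover have "g \<subseteq> k" if "right_intersection_condition X V"
  proof
    fix I assume "I \<in> g"
    then have "I \<inter> regular_mod p \<noteq> {}" if "p \<in> X" for p
      using that krull_dim_less_meets_regular_mod[OF assms(2,3)] by (simp add: X_def Spec_def g_def)
    then show "I \<in> k" using \<open>I \<in> g\<close> \<open>right_intersection_condition X V\<close>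
      by (auto simp: right_intersection_condition_def k_def g_def)
  qed
  ultimately show ?thesis by blast
qed

end
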